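(* Let $S'$ be a finite poset that has an induced sub-poset isomorphic or anti-isomorphic to one of the posets $S_1,\dots,S_5$ below. Then there exists a stochastically monotone generator on $S'$ which is not realizably monotone. $S_1=\{w,a,b,c,d\}$: $w<a$, $a<b<d$, $a<c<d$, $b,c$ incomparable. $S_2=\{a,b,c,w,d\}$: $a<b<d$, $a<c<d$, $a<w<d$, $b,c,w$ pairwise incomparable. $S_3=\{a,b,c,w,d\}$: $a<b<d$, $a<c<w<d$, $b$ incomparable to $c,w$. $S_4=\{a,b,c,d,w\}$ with strict relations exactly $a<w,a<c,a<d,w<c,b<c,b<d$. $S_5=\{a,b,c,d,w\}$: $a,b<c,d<w$, with $a,b$ incomparable and $c,d$ incomparable.
   Context: A generator on a finite poset $S$ is a matrix $L$ with $L_{x,y}\ge0$ for $x\ne y$ and rows summing to $0$; $L_{x,\Gamma}=\sum_{z\in\Gamma}L_{x,z}$. $L$ is stochastically monotone iff for every up-set $\Gamma$ and $x\le y\notin\Gamma$, $L_{x,\Gamma}\le L_{y,\Gamma}$, and for every down-set $\Gamma$ and $y\ge x\notin\Gamma$, $L_{x,\Gamma}\ge L_{y,\Gamma}$. $L$ is realizably monotone iff there exists $\Lambda:\mathcal M\to[0,\infty)$, $\mathcal M$ the set of increasing maps $S\to S$, with $L_{x,y}=\sum_{f\in\mathcal M:f(x)=y}\Lambda(f)$ for all $x\ne y$. An induced sub-poset is a subset with the restricted order. *)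

theory Defs
  imports Complex_Main "HOL-Library.FuncSet"
begin

definition finite_poset :: "'a set \<Rightarrow> ('a \<Rightarrow> 'a \<Rightarrow> bool) \<Rightarrow> bool" where
  "finite_poset S le \<longleftrightarrow> finite S \<and>
     (\<forall>x\<in>S. le x x) \<and>
     (\<forall>x\<in>S. \<forall>y\<in>S. le x y \<and> le y x \<longrightarrow> x = y) \<and>
     (\<forall>x\<in>S. \<forall>y\<in>S. \<forall>z\<in>S. le x y \<and> le y z \<longrightarrow> le x z)"

definition generator :: "'a set \<Rightarrow> ('a \<Rightarrow> 'a \<Rightarrow> real) \<Rightarrow> bool" where
  "generator S L \<longleftrightarrow>
     (\<forall>x\<in>S. \<forall>y\<in>S. x \<noteq> y \<longrightarrow> L x y \<ge> 0) \<and>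
     (\<forall>x\<in>S. (\<Sum>y\<in>S. L x y) = 0)"

definition rate_to :: "('a \<Rightarrow> 'a \<Rightarrow> real) \<Rightarrow> 'a \<Rightarrow> 'a set \<Rightarrow> real" where
  "rate_to L x \<Gamma> = (\<Sum>z\<in>\<Gamma>. L x z)"

definition up_set :: "'a set \<Rightarrow> ('a \<Rightarrow> 'a \<Rightarrow> bool) \<Rightarrow> 'a set \<Rightarrow> bool" where
  "up_set S le \<Gamma> \<longleftrightarrow> \<Gamma> \<subseteq> S \<and> (\<forall>x\<in>\<Gamma>. \<forall>y\<in>S. le x y \<longrightarrow> y \<in> \<Gamma>)"

definition down_set :: "'a set \<Rightarrow> ('a \<Rightarrow> 'a \<Rightarrow> bool) \<Rightarrow> 'a set \<Rightarrow> bool" where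
  "down_set S le \<Gamma> \<longleftrightarrow> \<Gamma> \<subseteq> S \<and> (\<forall>x\<in>\<Gamma>. \<forall>y\<in>S. le y x \<longrightarrow> y \<in> \<Gamma>)"

definition stochastically_monotone ::
  "'a set \<Rightarrow> ('a \<Rightarrow> 'a \<Rightarrow> bool) \<Rightarrow> ('a \<Rightarrow> 'a \<Rightarrow> real) \<Rightarrow> bool" where
  "stochastically_monotone S le L \<longleftrightarrow>
     (\<forall>\<Gamma>. up_set S le \<Gamma> \<longrightarrow>
        (\<forall>x\<in>S. \<forall>y\<in>S. le x y \<and> y \<notin> \<Gamma> \<longrightarrow> rate_to L x \<Gamma> \<le> rate_to L y \<Gamma>)) \<and>
     (\<forall>\<Gamma>. down_set S le \<Gamma> \<longrightarrow>
        (\<forall>x\<in>S. \<forall>y\<in>S. le x y \<and> x \<notin> \<Gamma> \<longrightarrow> rate_to L x \<Gamma> \<ge> rate_to L y \<Gamma>))"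

text \<open>Increasing maps S \<rightarrow> S (extensional outside S, so that the set is finite).\<close>
definition increasing_maps :: "'a set \<Rightarrow> ('a \<Rightarrow> 'a \<Rightarrow> bool) \<Rightarrow> ('a \<Rightarrow> 'a) set" where
  "increasing_maps S le =
     {f \<in> S \<rightarrow>\<^sub>E S. \<forall>x\<in>S. \<forall>y\<in>S. le x y \<longrightarrow> le (f x) (f y)}"

definition realizably_monotone ::
  "'a set \<Rightarrow> ('a \<Rightarrow> 'a \<Rightarrow> bool) \<Rightarrow> ('a \<Rightarrow> 'a \<Rightarrow> real) \<Rightarrow> bool" where
  "realizably_monotone S le L \<longleftrightarrow>
     (\<exists>\<Lambda> :: ('a \<Rightarrow> 'a) \<Rightarrow> real.
        (\<forall>f\<in>increasing_maps S le. \<Lambda> f \<ge> 0) \<and>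
        (\<forall>x\<in>S. \<forall>y\<in>S. x \<noteq> y \<longrightarrow>
           L x y = (\<Sum>f\<in>{f \<in> increasing_maps S le. f x = y}. \<Lambda> f)))"

text \<open>S1: w=0, a=1, b=2, c=3, d=4; w<a, a<b<d, a<c<d.\<close>
definition P1_strict :: "(nat \<times> nat) set" where
  "P1_strict = {(0,1),(0,2),(0,3),(0,4),(1,2),(1,3),(1,4),(2,4),(3,4)}"

text \<open>S2: a=0, b=1, c=2, w=3, d=4; a<b,c,w<d.\<close>
definition P2_strict :: "(nat \<times> nat) set" where
  "P2_strict = {(0,1),(0,2),(0,3),(0,4),(1,4),(2,4),(3,4)}"

text \<open>S3: a=0, b=1, c=2, w=3, d=4; a<b<d, a<c<w<d.\<close>
definition P3_strict :: "(nat \<times> nat) set" where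
  "P3_strict = {(0,1),(0,2),(0,3),(0,4),(1,4),(2,3),(2,4),(3,4)}"

text \<open>S4: a=0, b=1, c=2, d=3, w=4; exactly a<w, a<c, a<d, w<c, b<c, b<d.\<close>
definition P4_strict :: "(nat \<times> nat) set" where
  "P4_strict = {(0,4),(0,2),(0,3),(4,2),(1,2),(1,3)}"

text \<open>S5: a=0, b=1, c=2, d=3, w=4; a,b < c,d < w.\<close>
definition P5_strict :: "(nat \<times> nat) set" where
  "P5_strict = {(0,2),(0,3),(0,4),(1,2),(1,3),(1,4),(2,4),(3,4)}"

definition le_of :: "(nat \<times> nat) set \<Rightarrow> nat \<Rightarrow> nat \<Rightarrow> bool" where
  "le_of R i j \<longleftrightarrow> i = j \<or> (i, j) \<in> R"

definition has_induced_copy ::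
  "'a set \<Rightarrow> ('a \<Rightarrow> 'a \<Rightarrow> bool) \<Rightarrow> (nat \<Rightarrow> nat \<Rightarrow> bool) \<Rightarrow> bool" where
  "has_induced_copy S le P \<longleftrightarrow>
     (\<exists>\<phi>. inj_on \<phi> {0..<5} \<and> \<phi> ` {0..<5} \<subseteq> S \<and>
        (\<forall>i\<in>{0..<5}. \<forall>j\<in>{0..<5}. le (\<phi> i) (\<phi> j) \<longleftrightarrow> P i j))"

definition has_induced_copy_or_dual ::
  "'a set \<Rightarrow> ('a \<Rightarrow> 'a \<Rightarrow> bool) \<Rightarrow> (nat \<Rightarrow> nat \<Rightarrow> bool) \<Rightarrow> bool" where
  "has_induced_copy_or_dual S le P \<longleftrightarrow>
     has_induced_copy S le P \<or> has_induced_copy S le (\<lambda>i j. P j i)"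

end

theory Submission
  imports Defs
begin

text \<open>A realization \<open>\<Lambda>\<close> of \<open>L\<close> can only charge increasing maps all of whose moves
  \<open>x \<mapsto> f x \<noteq> x\<close> are transitions of \<open>L\<close>. For each of the five posets we build \<open>L\<close> from
  unit-rate jumps ``every state satisfying \<open>P\<close> jumps to \<open>t\<close>'' and single out three unit jumps
  \<open>x\<^sub>1 \<rightarrow> y\<^sub>1\<close>, \<open>x\<^sub>2 \<rightarrow> y\<^sub>2\<close>, \<open>x\<^sub>3 \<rightarrow> y\<^sub>3\<close> such that every such map performing one of the first two
  also performs the third, and none performs both. Summing \<open>\<Lambda>\<close> over these maps then gives
  \<open>1 + 1 \<le> 1\<close>. Stochastic monotonicity of \<open>L\<close> is a finite check on up- and down-sets, and
  anti-isomorphic copies are covered because both notions of monotonicity are invariant under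
  reversing the order.\<close>

definition monotonicity_gap :: "'a set \<Rightarrow> ('a \<Rightarrow> 'a \<Rightarrow> bool) \<Rightarrow> bool" where
  "monotonicity_gap S le \<longleftrightarrow>
     (\<exists>L. generator S L \<and> stochastically_monotone S le L \<and> \<not> realizably_monotone S le L)"

definition generator_of :: "'a set \<Rightarrow> ('a \<Rightarrow> 'a \<Rightarrow> real) \<Rightarrow> 'a \<Rightarrow> 'a \<Rightarrow> real" where
  "generator_of S A x y = (if x = y then - (\<Sum>z\<in>S-{x}. A x z) else A x y)"

definition jump_rates :: "(('a \<Rightarrow> bool) \<times> 'a) list \<Rightarrow> 'a \<Rightarrow> 'a \<Rightarrow> real" where
  "jump_rates js x y = (if x = y then 0 else (\<Sum>(P, t)\<leftarrow>js. if P x \<and> y = t then 1 else 0))"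

lemma jump_rates_nonneg: "jump_rates js x y \<ge> 0"
  unfolding jump_rates_def by (auto intro!: sum_list_nonneg split: prod.splits)

lemma sum_jump_rates:
  assumes "finite G" "x \<notin> G"
  shows "(\<Sum>y\<in>G. jump_rates js x y) = (\<Sum>(P, t)\<leftarrow>js. if P x \<and> t \<in> G then 1 else 0)"
proof (induction js)
  case Nil
  show ?case by (simp add: jump_rates_def sum.neutral)
next
  case (Cons j js)
  obtain P t where j: "j = (P, t)" by fastforce
  have "(\<Sum>y\<in>G. jump_rates (j # js) x y)
      = (\<Sum>y\<in>G. (if P x \<and> y = t then 1 else 0) + jump_rates js x y)"
    using assms(2) by (intro sum.cong) (auto simp: jump_rates_def j)
  also have "\<dots> = (\<Sum>y\<in>G. if P x \<and> y = t then 1 else 0) + (\<Sum>y\<in>G. jump_rates js x y)"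
    by (rule sum.distrib)
  also have "(\<Sum>y\<in>G. if P x \<and> y = t then 1 else 0) = (if P x \<and> t \<in> G then 1 else (0::real))"
    using assms(1) by (cases "P x") (simp_all add: sum.delta')
  finally show ?case using Cons by (simp add: j)
qed

lemma jump_rates_pos_imp_jump:
  assumes "jump_rates js x y > 0"
  shows "\<exists>(P, t)\<in>set js. P x \<and> y = t"
proof (rule ccontr)
  assume "\<not> ?thesis"
  then have "jump_rates js x y = 0"
    unfolding jump_rates_def by (induction js) (auto split: if_splits)
  then show False using assms by simp
qed

lemma generator_generator_of:
  assumes "finite S" "\<And>x y. A x y \<ge> 0"
  shows "generator S (generator_of S A)"
  unfolding generator_def
proof safe
  fix x y :: 'a assume "x \<noteq> y"
  then show "0 \<le> generator_of S A x y" using assms(2) by (simp add: generator_of_def)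
next
  fix x assume "x \<in> S"
  then have "(\<Sum>y\<in>S. generator_of S A x y)
      = generator_of S A x x + (\<Sum>y\<in>S-{x}. generator_of S A x y)"
    using assms(1) by (simp add: sum.remove)
  also have "(\<Sum>y\<in>S-{x}. generator_of S A x y) = (\<Sum>y\<in>S-{x}. A x y)"
    by (intro sum.cong) (auto simp: generator_of_def)
  finally show "(\<Sum>y\<in>S. generator_of S A x y) = 0" by (simp add: generator_of_def)
qed

lemma rate_to_generator_of: "x \<notin> G \<Longrightarrow> rate_to (generator_of S A) x G = (\<Sum>y\<in>G. A x y)"
  unfolding rate_to_def by (intro sum.cong) (auto simp: generator_of_def)

text \<open>Both states lie outside \<open>\<Gamma>\<close> in either condition, so the diagonal never enters.\<close>
lemma stochastically_monotone_generator_of: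
  assumes up: "\<And>G x y. up_set S le G \<Longrightarrow> x \<in> S \<Longrightarrow> y \<in> S \<Longrightarrow> le x y \<Longrightarrow> x \<notin> G \<Longrightarrow> y \<notin> G \<Longrightarrow>
      (\<Sum>z\<in>G. A x z) \<le> (\<Sum>z\<in>G. A y z)"
    and down: "\<And>G x y. down_set S le G \<Longrightarrow> x \<in> S \<Longrightarrow> y \<in> S \<Longrightarrow> le x y \<Longrightarrow> x \<notin> G \<Longrightarrow> y \<notin> G \<Longrightarrow>
      (\<Sum>z\<in>G. A y z) \<le> (\<Sum>z\<in>G. A x z)"
  shows "stochastically_monotone S le (generator_of S A)"
  unfolding stochastically_monotone_def
proof safe
  fix G x y assume G: "up_set S le G" and "x \<in> S" "y \<in> S" "le x y" "y \<notin> G"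
  moreover from this have "x \<notin> G" unfolding up_set_def by blast
  ultimately show "rate_to (generator_of S A) x G \<le> rate_to (generator_of S A) y G"
    using up by (simp add: rate_to_generator_of)
next
  fix G x y assume G: "down_set S le G" and "x \<in> S" "y \<in> S" "le x y" "x \<notin> G"
  moreover from this have "y \<notin> G" unfolding down_set_def by blast
  ultimately show "rate_to (generator_of S A) y G \<le> rate_to (generator_of S A) x G"
    using down by (simp add: rate_to_generator_of)
qed

lemma finite_increasing_maps: "finite S \<Longrightarrow> finite (increasing_maps S le)"
  unfolding increasing_maps_def by (rule finite_subset[OF _ finite_PiE[of S "\<lambda>_. S"]]) auto

lemma increasing_mapsD:
  "f \<in> increasing_maps S le \<Longrightarrow> x \<in> S \<Longrightarrow> f x \<in> S"
  "f \<in> increasing_maps S le \<Longrightarrow> x \<in> S \<Longrightarrow> y \<in> S \<Longrightarrow> le x y \<Longrightarrow> le (f x) (f y)"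
  unfolding increasing_maps_def by auto

lemma sum_filter_disjoint_le:
  fixes \<Lambda> :: "'b \<Rightarrow> real"
  assumes "finite M" "\<forall>f\<in>M. \<Lambda> f \<ge> 0"
    and "\<And>f. f \<in> M \<Longrightarrow> \<Lambda> f \<noteq> 0 \<Longrightarrow> (P f \<or> Q f \<longrightarrow> R f) \<and> \<not> (P f \<and> Q f)"
  shows "(\<Sum>f\<in>{f\<in>M. P f}. \<Lambda> f) + (\<Sum>f\<in>{f\<in>M. Q f}. \<Lambda> f) \<le> (\<Sum>f\<in>{f\<in>M. R f}. \<Lambda> f)"
proof -
  have "(\<Sum>f\<in>{f\<in>M. P f}. \<Lambda> f) + (\<Sum>f\<in>{f\<in>M. Q f}. \<Lambda> f)
      = (\<Sum>f\<in>M. (if P f then \<Lambda> f else 0) + (if Q f then \<Lambda> f else 0))"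
    using assms(1) by (simp add: sum.inter_filter[symmetric] sum.distrib)
  also have "\<dots> \<le> (\<Sum>f\<in>M. if R f then \<Lambda> f else 0)"
    using assms(2,3) by (intro sum_mono) fastforce
  also have "\<dots> = (\<Sum>f\<in>{f\<in>M. R f}. \<Lambda> f)"
    using assms(1) by (simp add: sum.inter_filter)
  finally show ?thesis .
qed

lemma not_realizably_monotone_by_exclusion:
  fixes L :: "'a \<Rightarrow> 'a \<Rightarrow> real"
  assumes "finite S"
    and mem: "x1 \<in> S" "y1 \<in> S" "x2 \<in> S" "y2 \<in> S" "x3 \<in> S" "y3 \<in> S"
    and neq: "x1 \<noteq> y1" "x2 \<noteq> y2" "x3 \<noteq> y3"
    and rates: "L x3 y3 < L x1 y1 + L x2 y2"
    and exclusion: "\<And>f. f \<in> increasing_maps S le \<Longrightarrow> (\<forall>u\<in>S. f u \<noteq> u \<longrightarrow> L u (f u) > 0) \<Longrightarrow>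
      (f x1 = y1 \<or> f x2 = y2 \<longrightarrow> f x3 = y3) \<and> \<not> (f x1 = y1 \<and> f x2 = y2)"
  shows "\<not> realizably_monotone S le L"
proof
  assume "realizably_monotone S le L"
  then obtain \<Lambda> :: "('a \<Rightarrow> 'a) \<Rightarrow> real" where nonneg: "\<forall>f\<in>increasing_maps S le. \<Lambda> f \<ge> 0"
    and realizes: "\<forall>x\<in>S. \<forall>y\<in>S. x \<noteq> y \<longrightarrow>
      L x y = (\<Sum>f\<in>{f \<in> increasing_maps S le. f x = y}. \<Lambda> f)"
    unfolding realizably_monotone_def by blast
  have fin: "finite (increasing_maps S le)" using assms(1) by (rule finite_increasing_maps)
  have supported: "L u (f u) > 0"
    if f: "f \<in> increasing_maps S le" "\<Lambda> f \<noteq> 0" and u: "u \<in> S" "f u \<noteq> u" for f u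
  proof -
    have "\<Lambda> f \<le> (\<Sum>g\<in>{g \<in> increasing_maps S le. g u = f u}. \<Lambda> g)"
      using nonneg f(1) fin by (intro member_le_sum) auto
    moreover have "\<Lambda> f > 0" using nonneg f by force
    ultimately show ?thesis using realizes u increasing_mapsD(1)[OF f(1) u(1)] by force
  qed
  have "(\<Sum>f\<in>{f\<in>increasing_maps S le. f x1 = y1}. \<Lambda> f)
      + (\<Sum>f\<in>{f\<in>increasing_maps S le. f x2 = y2}. \<Lambda> f)
      \<le> (\<Sum>f\<in>{f\<in>increasing_maps S le. f x3 = y3}. \<Lambda> f)"
  proof (rule sum_filter_disjoint_le[OF fin nonneg])
    fix f assume "f \<in> increasing_maps S le" "\<Lambda> f \<noteq> 0"
    then show "(f x1 = y1 \<or> f x2 = y2 \<longrightarrow> f x3 = y3) \<and> \<not> (f x1 = y1 \<and> f x2 = y2)"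
      by (intro exclusion) (auto intro: supported)
  qed
  then show False using rates realizes mem neq by simp
qed

locale finite_poset_on =
  fixes S :: "'a set" and le :: "'a \<Rightarrow> 'a \<Rightarrow> bool"
  assumes finite_poset: "finite_poset S le"
begin

lemma finite: "finite S"
  and refl: "x \<in> S \<Longrightarrow> le x x"
  and trans: "x \<in> S \<Longrightarrow> y \<in> S \<Longrightarrow> z \<in> S \<Longrightarrow> le x y \<Longrightarrow> le y z \<Longrightarrow> le x z"
  using finite_poset unfolding finite_poset_def by blast+

lemma sum_jump_rates_subset:
  "G \<subseteq> S \<Longrightarrow> z \<notin> G \<Longrightarrow>
    (\<Sum>y\<in>G. jump_rates js z y) = (\<Sum>(P, t)\<leftarrow>js. if P z \<and> t \<in> G then 1 else 0)"
  by (rule sum_jump_rates[OF finite_subset[OF _ finite]])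

lemma jump_generator_monotonicity_gap:
  assumes "stochastically_monotone S le (generator_of S (jump_rates js))"
    and "\<not> realizably_monotone S le (generator_of S (jump_rates js))"
  shows "monotonicity_gap S le"
  unfolding monotonicity_gap_def
  using generator_generator_of[OF finite jump_rates_nonneg] assms by (intro exI conjI)

lemma jump_generator_not_realizably_monotone:
  assumes mem: "x1 \<in> S" "y1 \<in> S" "x2 \<in> S" "y2 \<in> S" "x3 \<in> S" "y3 \<in> S"
    and neq: "x1 \<noteq> y1" "x2 \<noteq> y2" "x3 \<noteq> y3"
    and rates: "jump_rates js x3 y3 < jump_rates js x1 y1 + jump_rates js x2 y2"
    and exclusion: "\<And>f. f \<in> increasing_maps S le \<Longrightarrow>
      (\<And>u. u \<in> S \<Longrightarrow> f u \<noteq> u \<Longrightarrow> \<exists>(P, t)\<in>set js. P u \<and> f u = t) \<Longrightarrow>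
      (f x1 = y1 \<or> f x2 = y2 \<longrightarrow> f x3 = y3) \<and> \<not> (f x1 = y1 \<and> f x2 = y2)"
  shows "\<not> realizably_monotone S le (generator_of S (jump_rates js))"
proof (rule not_realizably_monotone_by_exclusion[OF finite mem neq])
  show "generator_of S (jump_rates js) x3 y3
      < generator_of S (jump_rates js) x1 y1 + generator_of S (jump_rates js) x2 y2"
    using rates neq by (simp add: generator_of_def)
next
  fix f assume "f \<in> increasing_maps S le"
    and "\<forall>u\<in>S. f u \<noteq> u \<longrightarrow> generator_of S (jump_rates js) u (f u) > 0"
  then show "(f x1 = y1 \<or> f x2 = y2 \<longrightarrow> f x3 = y3) \<and> \<not> (f x1 = y1 \<and> f x2 = y2)"
    by (intro exclusion jump_rates_pos_imp_jump) (auto simp: generator_of_def)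
qed

end

text \<open>In \<open>S\<^sub>1\<close> take \<open>(p, q\<^sub>1, q\<^sub>2, r, t) = (w, b, c, a, d)\<close>, in \<open>S\<^sub>5\<close> take \<open>(a, c, d, b, w)\<close>.\<close>
locale gadget_S1_S5 = finite_poset_on +
  fixes p q1 q2 r t :: 'a
  assumes mem: "p \<in> S" "q1 \<in> S" "q2 \<in> S" "r \<in> S" "t \<in> S"
    and rel: "le p q1" "le p q2" "\<not> le q1 q2" "\<not> le q2 q1" "le q1 t" "le q2 t"
      "le r q1" "le r q2" "\<not> le r p"
begin

definition below :: "'a \<Rightarrow> bool" where
  "below z \<longleftrightarrow> le z q1 \<or> le z q2"

definition jumps :: "(('a \<Rightarrow> bool) \<times> 'a) list" where
  "jumps = [(below, p), (\<lambda>z. \<not> below z, q1), (\<lambda>z. \<not> below z, q2)]"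

lemma jump_count:
  "G \<subseteq> S \<Longrightarrow> z \<notin> G \<Longrightarrow> (\<Sum>y\<in>G. jump_rates jumps z y) =
    (if below z \<and> p \<in> G then 1 else 0) + (if \<not> below z \<and> q1 \<in> G then 1 else 0)
    + (if \<not> below z \<and> q2 \<in> G then 1 else 0)"
  by (simp add: sum_jump_rates_subset jumps_def)

lemma stochastically_monotone: "stochastically_monotone S le (generator_of S (jump_rates jumps))"
proof (rule stochastically_monotone_generator_of)
  fix G x y assume G: "up_set S le G" and xy: "x \<in> S" "y \<in> S" "le x y" "x \<notin> G" "y \<notin> G"
  have "p \<in> G \<Longrightarrow> q1 \<in> G" using G mem rel(1) by (auto simp: up_set_def)
  moreover have "below y \<Longrightarrow> below x" using xy trans mem unfolding below_def by blast
  ultimately show "(\<Sum>z\<in>G. jump_rates jumps x z) \<le> (\<Sum>z\<in>G. jump_rates jumps y z)"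
    using G xy by (auto simp: jump_count up_set_def)
next
  fix G x y assume G: "down_set S le G" and xy: "x \<in> S" "y \<in> S" "le x y" "x \<notin> G" "y \<notin> G"
  have GS: "G \<subseteq> S" and closed: "\<And>u v. u \<in> G \<Longrightarrow> v \<in> S \<Longrightarrow> le v u \<Longrightarrow> v \<in> G"
    using G by (auto simp: down_set_def)
  have "q1 \<in> G \<Longrightarrow> p \<in> G" "q2 \<in> G \<Longrightarrow> p \<in> G" using closed mem rel(1,2) by blast+
  moreover have "le x q1 \<Longrightarrow> q1 \<notin> G" "le x q2 \<Longrightarrow> q2 \<notin> G" using closed xy by blast+
  moreover have "below y \<Longrightarrow> below x" using xy trans mem unfolding below_def by blast
  ultimately show "(\<Sum>z\<in>G. jump_rates jumps y z) \<le> (\<Sum>z\<in>G. jump_rates jumps x z)"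
    using xy by (auto simp: jump_count[OF GS] below_def)
qed

text \<open>A supported increasing map sending \<open>t\<close> to \<open>q\<^sub>1\<close> must move \<open>q\<^sub>2\<close> down to \<open>p\<close>, and then
  \<open>r \<le> q\<^sub>2\<close> down to \<open>p\<close> as well; symmetrically for \<open>q\<^sub>2\<close>.\<close>
lemma not_realizably_monotone:
  "\<not> realizably_monotone S le (generator_of S (jump_rates jumps))"
proof -
  have facts: "below r" "below q1" "below q2" "\<not> below t" "q1 \<noteq> q2" "t \<noteq> q1" "t \<noteq> q2" "r \<noteq> p"
    using rel refl[OF mem(1)] refl[OF mem(2)] refl[OF mem(3)] trans[OF mem(3,5,2)] trans[OF mem(2,5,3)]
    unfolding below_def by auto
  show ?thesis
  proof (rule jump_generator_not_realizably_monotone[OF mem(5,2,5,3,4,1)])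
    show "jump_rates jumps r p < jump_rates jumps t q1 + jump_rates jumps t q2"
      using facts by (simp add: jump_rates_def jumps_def)
  next
    fix f assume f: "f \<in> increasing_maps S le"
      and supp: "\<And>u. u \<in> S \<Longrightarrow> f u \<noteq> u \<Longrightarrow> \<exists>(P, t)\<in>set jumps. P u \<and> f u = t"
    have to_p: "f u = p" if "u \<in> S" "f u \<noteq> u" "below u" for u
      using supp[OF that(1,2)] that(3) by (auto simp: jumps_def)
    note mono = increasing_mapsD(2)[OF f]
    have "f r = p" if "f t = q1"
    proof -
      have "le (f q2) q1" using mono[OF mem(3,5) rel(6)] that by simp
      then have "f q2 \<noteq> q2" using rel(4) by auto
      then have "f q2 = p" using to_p[OF mem(3)] facts by auto
      then have "le (f r) p" using mono[OF mem(4,3) rel(8)] by simp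
      then have "f r \<noteq> r" using rel(9) by auto
      then show "f r = p" using to_p[OF mem(4)] facts by auto
    qed
    moreover have "f r = p" if "f t = q2"
    proof -
      have "le (f q1) q2" using mono[OF mem(2,5) rel(5)] that by simp
      then have "f q1 \<noteq> q1" using rel(3) by auto
      then have "f q1 = p" using to_p[OF mem(2)] facts by auto
      then have "le (f r) p" using mono[OF mem(4,2) rel(7)] by simp
      then have "f r \<noteq> r" using rel(9) by auto
      then show "f r = p" using to_p[OF mem(4)] facts by auto
    qed
    ultimately show "(f t = q1 \<or> f t = q2 \<longrightarrow> f r = p) \<and> \<not> (f t = q1 \<and> f t = q2)"
      using facts by blast
  qed (use facts in auto)
qed

lemma monotonicity_gap: "monotonicity_gap S le"
  using stochastically_monotone not_realizably_monotone by (rule jump_generator_monotonicity_gap)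

end

locale gadget_S2 = finite_poset_on +
  fixes a b c w d :: 'a
  assumes mem: "a \<in> S" "b \<in> S" "c \<in> S" "w \<in> S" "d \<in> S"
    and rel: "le a b" "le a w" "le a d" "le b d" "le w d" "le a c" "le c d"
      "\<not> le b a" "\<not> le c b" "\<not> le b c" "\<not> le w b" "\<not> le b w" "\<not> le d b"
      "\<not> le w c" "\<not> le w a" "\<not> le d w"
begin

definition jumps :: "(('a \<Rightarrow> bool) \<times> 'a) list" where
  "jumps = [(\<lambda>z. \<not> le z b, d), (\<lambda>z. le b z, w), (\<lambda>z. \<not> le b z, a), (\<lambda>z. le z b \<and> \<not> le b z, w)]"

lemma jump_count:
  "G \<subseteq> S \<Longrightarrow> z \<notin> G \<Longrightarrow> (\<Sum>y\<in>G. jump_rates jumps z y) =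
    (if \<not> le z b \<and> d \<in> G then 1 else 0) + (if le b z \<and> w \<in> G then 1 else 0)
    + (if \<not> le b z \<and> a \<in> G then 1 else 0) + (if (le z b \<and> \<not> le b z) \<and> w \<in> G then 1 else 0)"
  by (simp add: sum_jump_rates_subset jumps_def)

lemma stochastically_monotone: "stochastically_monotone S le (generator_of S (jump_rates jumps))"
proof (rule stochastically_monotone_generator_of)
  fix G x y assume G: "up_set S le G" and xy: "x \<in> S" "y \<in> S" "le x y" "x \<notin> G" "y \<notin> G"
  have GS: "G \<subseteq> S" and closed: "\<And>u v. u \<in> G \<Longrightarrow> v \<in> S \<Longrightarrow> le u v \<Longrightarrow> v \<in> G"
    using G by (auto simp: up_set_def)
  have "le b x \<Longrightarrow> le b y" "le y b \<Longrightarrow> le x b" using xy trans mem(2) by blast+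
  moreover have "le b y \<Longrightarrow> a \<notin> G" using closed xy mem(2) rel(1) by blast
  moreover have "w \<in> G \<Longrightarrow> d \<in> G" using closed mem(5) rel(5) by blast
  ultimately show "(\<Sum>z\<in>G. jump_rates jumps x z) \<le> (\<Sum>z\<in>G. jump_rates jumps y z)"
    using xy by (cases "le b x"; cases "le b y"; cases "le x b"; cases "le y b")
      (auto simp: jump_count[OF GS])
next
  fix G x y assume G: "down_set S le G" and xy: "x \<in> S" "y \<in> S" "le x y" "x \<notin> G" "y \<notin> G"
  have GS: "G \<subseteq> S" and closed: "\<And>u v. u \<in> G \<Longrightarrow> v \<in> S \<Longrightarrow> le v u \<Longrightarrow> v \<in> G"
    using G by (auto simp: down_set_def)
  have "le b x \<Longrightarrow> le b y" "le y b \<Longrightarrow> le x b" using xy trans mem(2) by blast+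
  moreover have "le x b \<Longrightarrow> d \<notin> G" using closed xy mem(2) rel(4) by blast
  moreover have "d \<in> G \<Longrightarrow> a \<in> G" "d \<in> G \<Longrightarrow> w \<in> G" "w \<in> G \<Longrightarrow> a \<in> G"
    using closed mem rel(2,3,5) by blast+
  ultimately show "(\<Sum>z\<in>G. jump_rates jumps y z) \<le> (\<Sum>z\<in>G. jump_rates jumps x z)"
    using xy by (cases "le b x"; cases "le b y"; cases "le x b"; cases "le y b")
      (auto simp: jump_count[OF GS])
qed

text \<open>Sending \<open>a\<close> or \<open>d\<close> to \<open>w\<close> forces \<open>b\<close> to \<open>w\<close>; doing both would squeeze \<open>c\<close> onto \<open>w\<close>,
  which is not a jump available from \<open>c\<close>.\<close>
lemma not_realizably_monotone:
  "\<not> realizably_monotone S le (generator_of S (jump_rates jumps))"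
proof -
  have facts: "le b b" "le w w" "le d d" "a \<noteq> w" "d \<noteq> w" "b \<noteq> w"
    using refl mem rel by auto
  show ?thesis
  proof (rule jump_generator_not_realizably_monotone[OF mem(1,4,5,4,2,4)])
    show "jump_rates jumps b w < jump_rates jumps a w + jump_rates jumps d w"
      using facts rel by (simp add: jump_rates_def jumps_def)
  next
    fix f assume f: "f \<in> increasing_maps S le"
      and supp: "\<And>u. u \<in> S \<Longrightarrow> f u \<noteq> u \<Longrightarrow> \<exists>(P, t)\<in>set jumps. P u \<and> f u = t"
    note mono = increasing_mapsD(2)[OF f]
    have b_to_w: "f b = w" if "f b \<noteq> b"
      using supp[OF mem(2) that] facts by (auto simp: jumps_def)
    have "f b = w" if "f a = w"
    proof -
      have "le w (f b)" using mono[OF mem(1,2) rel(1)] that by simp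
      then have "f b \<noteq> b" using rel(11) by auto
      then show "f b = w" by (rule b_to_w)
    qed
    moreover have "f b = w" if "f d = w"
    proof -
      have "le (f b) w" using mono[OF mem(2,5) rel(4)] that by simp
      then have "f b \<noteq> b" using rel(12) by auto
      then show "f b = w" by (rule b_to_w)
    qed
    moreover have False if "f a = w" "f d = w"
    proof -
      have above: "le w (f c)" using mono[OF mem(1,3) rel(6)] that by simp
      have below: "le (f c) w" using mono[OF mem(3,5) rel(7)] that by simp
      have "f c \<noteq> c" using above rel(14) by auto
      then have "f c = d \<or> f c = a" using supp[OF mem(3)] rel(9,10) by (auto simp: jumps_def)
      then show False using above below rel(15,16) by auto
    qed
    ultimately show "(f a = w \<or> f d = w \<longrightarrow> f b = w) \<and> \<not> (f a = w \<and> f d = w)"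
      by blast
  qed (use facts in auto)
qed

lemma monotonicity_gap: "monotonicity_gap S le"
  using stochastically_monotone not_realizably_monotone by (rule jump_generator_monotonicity_gap)

end

locale gadget_S3 = finite_poset_on +
  fixes a b c w d :: 'a
  assumes mem: "a \<in> S" "b \<in> S" "c \<in> S" "w \<in> S" "d \<in> S"
    and rel: "le a b" "le a c" "le b d" "le c w" "le w d"
      "\<not> le c b" "\<not> le b c" "\<not> le w c" "\<not> le b w" "\<not> le c a"
begin

definition jumps :: "(('a \<Rightarrow> bool) \<times> 'a) list" where
  "jumps = [(\<lambda>z. \<not> le b z, a), (\<lambda>z. le b z \<or> \<not> le c z, c)]"

lemma jump_count:
  "G \<subseteq> S \<Longrightarrow> z \<notin> G \<Longrightarrow> (\<Sum>y\<in>G. jump_rates jumps z y) =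
    (if \<not> le b z \<and> a \<in> G then 1 else 0) + (if (le b z \<or> \<not> le c z) \<and> c \<in> G then 1 else 0)"
  by (simp add: sum_jump_rates_subset jumps_def)

lemma stochastically_monotone: "stochastically_monotone S le (generator_of S (jump_rates jumps))"
proof (rule stochastically_monotone_generator_of)
  fix G x y assume G: "up_set S le G" and xy: "x \<in> S" "y \<in> S" "le x y" "x \<notin> G" "y \<notin> G"
  have GS: "G \<subseteq> S" and closed: "\<And>u v. u \<in> G \<Longrightarrow> v \<in> S \<Longrightarrow> le u v \<Longrightarrow> v \<in> G"
    using G by (auto simp: up_set_def)
  have "le b x \<Longrightarrow> le b y" "le c x \<Longrightarrow> le c y" using xy trans mem(2,3) by blast+
  moreover have "le b y \<Longrightarrow> a \<notin> G" using closed xy mem(2) rel(1) by blast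
  moreover have "le c y \<Longrightarrow> c \<notin> G" using closed xy by blast
  ultimately show "(\<Sum>z\<in>G. jump_rates jumps x z) \<le> (\<Sum>z\<in>G. jump_rates jumps y z)"
    using xy by (cases "le b x"; cases "le b y"; cases "le c x"; cases "le c y")
      (auto simp: jump_count[OF GS])
next
  fix G x y assume G: "down_set S le G" and xy: "x \<in> S" "y \<in> S" "le x y" "x \<notin> G" "y \<notin> G"
  have GS: "G \<subseteq> S" and closed: "\<And>u v. u \<in> G \<Longrightarrow> v \<in> S \<Longrightarrow> le v u \<Longrightarrow> v \<in> G"
    using G by (auto simp: down_set_def)
  have "le b x \<Longrightarrow> le b y" "le c x \<Longrightarrow> le c y" using xy trans mem(2,3) by blast+
  moreover have "c \<in> G \<Longrightarrow> a \<in> G" using closed mem(1) rel(2) by blast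
  ultimately show "(\<Sum>z\<in>G. jump_rates jumps y z) \<le> (\<Sum>z\<in>G. jump_rates jumps x z)"
    using xy by (cases "le b x"; cases "le b y"; cases "le c x"; cases "le c y")
      (auto simp: jump_count[OF GS])
qed

text \<open>Sending \<open>a\<close> or \<open>d\<close> to \<open>c\<close> forces \<open>b\<close> to \<open>c\<close>; doing both pushes \<open>w\<close> and then \<open>c\<close>
  down to \<open>a\<close>, contradicting \<open>c = f a \<le> f c\<close>.\<close>
lemma not_realizably_monotone:
  "\<not> realizably_monotone S le (generator_of S (jump_rates jumps))"
proof -
  have facts: "le b b" "le b d" "a \<noteq> c" "d \<noteq> c" "b \<noteq> c"
    using refl mem rel by auto
  show ?thesis
  proof (rule jump_generator_not_realizably_monotone[OF mem(1,3,5,3,2,3)])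
    show "jump_rates jumps b c < jump_rates jumps a c + jump_rates jumps d c"
      using facts rel by (simp add: jump_rates_def jumps_def)
  next
    fix f assume f: "f \<in> increasing_maps S le"
      and supp: "\<And>u. u \<in> S \<Longrightarrow> f u \<noteq> u \<Longrightarrow> \<exists>(P, t)\<in>set jumps. P u \<and> f u = t"
    note mono = increasing_mapsD(2)[OF f]
    have b_to_c: "f b = c" if "f b \<noteq> b"
      using supp[OF mem(2) that] facts by (auto simp: jumps_def)
    have "f b = c" if "f a = c"
    proof -
      have "le c (f b)" using mono[OF mem(1,2) rel(1)] that by simp
      then have "f b \<noteq> b" using rel(6) by auto
      then show "f b = c" by (rule b_to_c)
    qed
    moreover have "f b = c" if "f d = c"
    proof -
      have "le (f b) c" using mono[OF mem(2,5) rel(3)] that by simp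
      then have "f b \<noteq> b" using rel(7) by auto
      then show "f b = c" by (rule b_to_c)
    qed
    moreover have False if "f d = c" "f a = c"
    proof -
      have "le (f w) c" using mono[OF mem(4,5) rel(5)] that by simp
      then have "f w \<noteq> w" using rel(8) by auto
      then have "f w = a" using supp[OF mem(4)] rel(4,9) by (auto simp: jumps_def)
      then have "le (f c) a" using mono[OF mem(3,4) rel(4)] by simp
      then have "f c \<noteq> c" using rel(10) by auto
      then have "f c = a" using supp[OF mem(3)] rel(7) by (auto simp: jumps_def)
      moreover have "le (f a) (f c)" using mono[OF mem(1,3) rel(2)] .
      ultimately show False using that rel(10) by simp
    qed
    ultimately show "(f a = c \<or> f d = c \<longrightarrow> f b = c) \<and> \<not> (f a = c \<and> f d = c)"
      by blast
  qed (use facts in auto)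
qed

lemma monotonicity_gap: "monotonicity_gap S le"
  using stochastically_monotone not_realizably_monotone by (rule jump_generator_monotonicity_gap)

end

locale gadget_S4 = finite_poset_on +
  fixes a b c d w :: 'a
  assumes mem: "a \<in> S" "b \<in> S" "c \<in> S" "d \<in> S" "w \<in> S"
    and rel: "le b c" "le b d" "le a w" "le w c" "le a d"
      "\<not> le d c" "\<not> le a b" "\<not> le b w" "\<not> le d b" "\<not> le w d" "\<not> le c d" "\<not> le b a"
begin

definition jumps :: "(('a \<Rightarrow> bool) \<times> 'a) list" where
  "jumps = [(\<lambda>z. le z d, b), (\<lambda>z. le b z \<or> \<not> le z d, d)]"

lemma jump_count:
  "G \<subseteq> S \<Longrightarrow> z \<notin> G \<Longrightarrow> (\<Sum>y\<in>G. jump_rates jumps z y) =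
    (if le z d \<and> b \<in> G then 1 else 0) + (if (le b z \<or> \<not> le z d) \<and> d \<in> G then 1 else 0)"
  by (simp add: sum_jump_rates_subset jumps_def)

lemma stochastically_monotone: "stochastically_monotone S le (generator_of S (jump_rates jumps))"
proof (rule stochastically_monotone_generator_of)
  fix G x y assume G: "up_set S le G" and xy: "x \<in> S" "y \<in> S" "le x y" "x \<notin> G" "y \<notin> G"
  have GS: "G \<subseteq> S" and closed: "\<And>u v. u \<in> G \<Longrightarrow> v \<in> S \<Longrightarrow> le u v \<Longrightarrow> v \<in> G"
    using G by (auto simp: up_set_def)
  have "le b x \<Longrightarrow> le b y" "le y d \<Longrightarrow> le x d" using xy trans mem(2,4) by blast+
  moreover have "b \<in> G \<Longrightarrow> d \<in> G" using closed mem(4) rel(2) by blast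
  moreover have "le b y \<Longrightarrow> b \<notin> G" using closed xy by blast
  ultimately show "(\<Sum>z\<in>G. jump_rates jumps x z) \<le> (\<Sum>z\<in>G. jump_rates jumps y z)"
    using xy by (cases "le b x"; cases "le b y"; cases "le x d"; cases "le y d")
      (auto simp: jump_count[OF GS])
next
  fix G x y assume G: "down_set S le G" and xy: "x \<in> S" "y \<in> S" "le x y" "x \<notin> G" "y \<notin> G"
  have GS: "G \<subseteq> S" and closed: "\<And>u v. u \<in> G \<Longrightarrow> v \<in> S \<Longrightarrow> le v u \<Longrightarrow> v \<in> G"
    using G by (auto simp: down_set_def)
  have "le b x \<Longrightarrow> le b y" "le y d \<Longrightarrow> le x d" using xy trans mem(2,4) by blast+
  moreover have "le x d \<Longrightarrow> d \<notin> G" using closed xy by blast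
  ultimately show "(\<Sum>z\<in>G. jump_rates jumps y z) \<le> (\<Sum>z\<in>G. jump_rates jumps x z)"
    using xy by (cases "le b x"; cases "le b y"; cases "le x d"; cases "le y d")
      (auto simp: jump_count[OF GS])
qed

text \<open>Sending \<open>b\<close> to \<open>d\<close> lifts \<open>c\<close> to \<open>d\<close>; sending \<open>d\<close> to \<open>b\<close> does so too, via the chain
  \<open>a \<mapsto> b\<close>, \<open>w \<mapsto> d\<close>. Doing both would reverse \<open>b \<le> d\<close>.\<close>
lemma not_realizably_monotone:
  "\<not> realizably_monotone S le (generator_of S (jump_rates jumps))"
proof -
  have facts: "le b b" "le d d" "b \<noteq> d" "c \<noteq> d"
    using refl mem rel by auto
  show ?thesis
  proof (rule jump_generator_not_realizably_monotone[OF mem(2,4,4,2,3,4)])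
    show "jump_rates jumps c d < jump_rates jumps b d + jump_rates jumps d b"
      using facts rel by (simp add: jump_rates_def jumps_def)
  next
    fix f assume f: "f \<in> increasing_maps S le"
      and supp: "\<And>u. u \<in> S \<Longrightarrow> f u \<noteq> u \<Longrightarrow> \<exists>(P, t)\<in>set jumps. P u \<and> f u = t"
    note mono = increasing_mapsD(2)[OF f]
    have c_to_d: "f c = d" if "le d (f c)"
    proof -
      have "f c \<noteq> c" using that rel(6) by auto
      then show "f c = d" using supp[OF mem(3)] rel(11) by (auto simp: jumps_def)
    qed
    have "f c = d" if "f b = d"
      using c_to_d mono[OF mem(2,3) rel(1)] that by simp
    moreover have "f c = d" if "f d = b"
    proof -
      have "le (f a) b" using mono[OF mem(1,4) rel(5)] that by simp
      then have "f a \<noteq> a" using rel(7) by auto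
      then have "f a = b" using supp[OF mem(1)] rel(5,12) by (auto simp: jumps_def)
      then have "le b (f w)" using mono[OF mem(1,5) rel(3)] by simp
      then have "f w \<noteq> w" using rel(8) by auto
      then have "f w = d" using supp[OF mem(5)] rel(10) by (auto simp: jumps_def)
      then show "f c = d" using c_to_d mono[OF mem(5,3) rel(4)] by simp
    qed
    moreover have "\<not> (f b = d \<and> f d = b)"
      using mono[OF mem(2,4) rel(2)] rel(9) by auto
    ultimately show "(f b = d \<or> f d = b \<longrightarrow> f c = d) \<and> \<not> (f b = d \<and> f d = b)"
      by blast
  qed (use facts in auto)
qed

lemma monotonicity_gap: "monotonicity_gap S le"
  using stochastically_monotone not_realizably_monotone by (rule jump_generator_monotonicity_gap)

end

lemma finite_poset_converse: "finite_poset S le \<Longrightarrow> finite_poset S (\<lambda>x y. le y x)"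
  unfolding finite_poset_def by blast

lemma up_set_converse: "up_set S (\<lambda>x y. le y x) G = down_set S le G"
  unfolding up_set_def down_set_def by (rule refl)

lemma down_set_converse: "down_set S (\<lambda>x y. le y x) G = up_set S le G"
  unfolding up_set_def down_set_def by (rule refl)

text \<open>The converse lemmas must be instantiated before rewriting: as higher-order patterns
  they also match \<open>le\<close> itself and would loop.\<close>
lemma stochastically_monotone_converse:
  "stochastically_monotone S (\<lambda>x y. le y x) L \<longleftrightarrow> stochastically_monotone S le L"
  unfolding stochastically_monotone_def up_set_converse[of S le] down_set_converse[of S le]
  by fast

lemma increasing_maps_converse: "increasing_maps S (\<lambda>x y. le y x) = increasing_maps S le"
  unfolding increasing_maps_def by blast

lemma realizably_monotone_converse:
  "realizably_monotone S (\<lambda>x y. le y x) L \<longleftrightarrow> realizably_monotone S le L"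
  unfolding realizably_monotone_def increasing_maps_converse[of S le] by (rule refl)

lemma monotonicity_gap_converse:
  "monotonicity_gap S (\<lambda>x y. le y x) \<Longrightarrow> monotonicity_gap S le"
  unfolding monotonicity_gap_def stochastically_monotone_converse[of S le]
    realizably_monotone_converse[of S le] .

lemma has_induced_copy_converse:
  "has_induced_copy S le (\<lambda>i j. P j i) \<Longrightarrow> has_induced_copy S (\<lambda>x y. le y x) P"
  unfolding has_induced_copy_def by auto

lemma monotonicity_gap_if_induced_copy:
  assumes poset: "finite_poset S le"
    and R: "R \<in> {P1_strict, P2_strict, P3_strict, P4_strict, P5_strict}"
    and copy: "has_induced_copy S le (le_of R)"
  shows "monotonicity_gap S le"
proof -
  obtain \<phi> where "\<phi> ` {0..<5} \<subseteq> S"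
    and order: "\<forall>i\<in>{0..<5}. \<forall>j\<in>{0..<5}. le (\<phi> i) (\<phi> j) \<longleftrightarrow> le_of R i j"
    using copy unfolding has_induced_copy_def by blast
  then have mem: "\<phi> i \<in> S" if "i < 5" for i using that by auto
  have order': "le (\<phi> i) (\<phi> j) \<longleftrightarrow> le_of R i j" if "i < 5" "j < 5" for i j
    using order that by simp
  consider "R = P1_strict" | "R = P2_strict" | "R = P3_strict" | "R = P4_strict" | "R = P5_strict"
    using R by blast
  then show ?thesis
  proof cases
    case 1
    show ?thesis
      by (rule gadget_S1_S5.monotonicity_gap[of S le "\<phi> 0" "\<phi> 2" "\<phi> 3" "\<phi> 1" "\<phi> 4"],
          unfold_locales) (simp_all add: poset mem order' le_of_def 1 P1_strict_def)
  next
    case 2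
    show ?thesis
      by (rule gadget_S2.monotonicity_gap[of S le "\<phi> 0" "\<phi> 1" "\<phi> 2" "\<phi> 3" "\<phi> 4"],
          unfold_locales) (simp_all add: poset mem order' le_of_def 2 P2_strict_def)
  next
    case 3
    show ?thesis
      by (rule gadget_S3.monotonicity_gap[of S le "\<phi> 0" "\<phi> 1" "\<phi> 2" "\<phi> 3" "\<phi> 4"],
          unfold_locales) (simp_all add: poset mem order' le_of_def 3 P3_strict_def)
  next
    case 4
    show ?thesis
      by (rule gadget_S4.monotonicity_gap[of S le "\<phi> 0" "\<phi> 1" "\<phi> 2" "\<phi> 3" "\<phi> 4"],
          unfold_locales) (simp_all add: poset mem order' le_of_def 4 P4_strict_def)
  next
    case 5
    show ?thesis
      by (rule gadget_S1_S5.monotonicity_gap[of S le "\<phi> 0" "\<phi> 2" "\<phi> 3" "\<phi> 1" "\<phi> 4"],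
          unfold_locales) (simp_all add: poset mem order' le_of_def 5 P5_strict_def)
  qed
qed

theorem proposition4p2:
  fixes S :: "'a set" and le :: "'a \<Rightarrow> 'a \<Rightarrow> bool"
  assumes "finite_poset S le"
    and "\<exists>R\<in>{P1_strict, P2_strict, P3_strict, P4_strict, P5_strict}.
           has_induced_copy_or_dual S le (le_of R)"
  shows "\<exists>L. generator S L \<and> stochastically_monotone S le L \<and>
             \<not> realizably_monotone S le L"
proof -
  obtain R where R: "R \<in> {P1_strict, P2_strict, P3_strict, P4_strict, P5_strict}"
    and copy: "has_induced_copy_or_dual S le (le_of R)"
    using assms(2) by blast
  have "monotonicity_gap S le"
  proof (cases "has_induced_copy S le (le_of R)")
    case True
    then show ?thesis by (rule monotonicity_gap_if_induced_copy[OF assms(1) R])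
  next
    case False
    with copy have "has_induced_copy S le (\<lambda>i j. le_of R j i)"
      unfolding has_induced_copy_or_dual_def by blast
    then have "has_induced_copy S (\<lambda>x y. le y x) (le_of R)"
      by (rule has_induced_copy_converse)
    then have "monotonicity_gap S (\<lambda>x y. le y x)"
      by (rule monotonicity_gap_if_induced_copy[OF finite_poset_converse[OF assms(1)] R])
    then show ?thesis by (rule monotonicity_gap_converse)
  qed
  then show ?thesis unfolding monotonicity_gap_def .
qed

end
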